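(* Let $\kappa$ be a fixed grounding calculus. If a grounding tree $\Gamma[\Delta]\blacktriangleright A$ corresponds to a legitimate grounding derivation in $\kappa$, then $\Gamma[\Delta]\blacktriangleright A$ is derivable from the hypotheses $\Gamma,\Delta$ in any calculus that contains the rules of $\kappa$, the rules for the immediate grounding operator $\blacktriangleright$, and the rules for the grounding tree operator $\triangleright$.
   Context: A grounding calculus $\kappa$ is a natural-deduction system whose grounding rules have the form: from premisses $A_1,\dots,A_n$ (the ground) and a possibly empty list of premisses $[C_1,\dots,C_m]$ (the conditions) infer $B$. A grounding derivation is a derivation constructed by exclusively applying grounding rules of $\kappa$ to a set of consistent hypotheses and containing at least one rule application. Language: formulae are built from propositional variables with $\bot,\neg,\wedge,\vee,\to$, and immediate grounding formulae $\Gamma[\Delta]\blacktriangleright A$, where $\Gamma,\Delta$ are finite lists ($\Delta$ possibly empty) whose elements are either formulae or expressions $(\Theta[\Sigma])\triangleright B$, where $B$ is a formula and $\Theta,\Sigma$ are again such lists (so $\triangleright$ can be nested arbitrarily); an expression $(\Theta[\Sigma])\triangleright B$ is not itself a formula. A grounding tree is a formula $\Gamma[\Delta]\blacktriangleright A$; when no element of $\Gamma,\Delta$ has the form $(\cdot)\triangleright\cdot$ it is an immediate grounding claim. Rules for $\blacktriangleright$: Introduction: immediately below an application of a grounding rule of $\kappa$ with premisses $A_1,\dots,A_n,[C_1,\dots,C_m]$ and conclusion $B$, infer $A_1,\dots,A_n[C_1,\dots,C_m]\blacktriangleright B$. Eliminations: from $\Gamma[\Delta]\blacktriangleright B$ infer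 $B$, and infer any element of $\Gamma$ or of $\Delta$ whose outermost operator is not $\triangleright$; from $A_1,\dots,A_n[C_1,\dots,C_m]\blacktriangleright B$ infer $\bot$ whenever there is no grounding rule application with those premisses and conclusion. Rules for $\triangleright$: Introductions: from $\Delta[\Theta]\blacktriangleright A$ and $\Gamma_1,A,\Gamma_2[\Xi]\blacktriangleright B$ infer $\Gamma_1,(\Delta[\Theta])\triangleright A,\Gamma_2[\Xi]\blacktriangleright B$; from $\Delta[\Theta]\blacktriangleright C$ and $\Gamma[\Xi_1,C,\Xi_2]\blacktriangleright B$ infer $\Gamma[\Xi_1,(\Delta[\Theta])\triangleright C,\Xi_2]\blacktriangleright B$. Eliminations: from $\Gamma_1,(\Delta[\Theta])\triangleright A,\Gamma_2[\Xi]\blacktriangleright B$ infer $\Delta[\Theta]\blacktriangleright A$ and $\Gamma_1,A,\Gamma_2[\Xi]\blacktriangleright B$; from $\Gamma[\Xi_1,(\Delta[\Theta])\triangleright C,\Xi_2]\blacktriangleright B$ infer $\Delta[\Theta]\blacktriangleright C$ and $\Gamma[\Xi_1,C,\Xi_2]\blacktriangleright B$. Correspondence: a grounding tree $G_1,\dots,G_m[G_{m+1},\dots,G_n]\blacktriangleright A$ (or an expression $(G_1,\dots,G_m[G_{m+1},\dots,G_n])\triangleright A$) corresponds to a grounding derivation $\delta$ iff the root of $\delta$ is $A$, the last rule application $r$ of $\delta$ has $n$ premisses, the first $m$ of which are grounds and the rest conditions, and for each $i$: if $G_i$ does not have the form $(\cdot)\triangleright\cdot$ then the $i$-th premiss of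 $r$ is $G_i$, and if $G_i$ has the form $(\cdot)\triangleright\cdot$ then the grounding derivation of the $i$-th premiss of $r$ corresponds to $G_i$. *)

theory Defs
  imports Main
begin

text \<open>An element is either a formula (F A) or an expression (Theta[Sigma]) |> B,
  written T Theta Sigma B. The formula Gr Gamma Delta A is Gamma[Delta] >> A.\<close>

datatype form =
    PVar nat
  | Bot
  | Neg form
  | Conj form form
  | Disj form form
  | Imp form form
  | Gr "elem list" "elem list" form
and elem =
    F form
  | T "elem list" "elem list" form

definition imm :: "form list \<Rightarrow> form list \<Rightarrow> form \<Rightarrow> form" where
  "imm As Cs B = Gr (map F As) (map F Cs) B"

text \<open>A grounding calculus is given by the set of its admissible grounding
  rule applications (grounds, conditions, conclusion).\<close>
type_synonym gcalc = "(form list \<times> form list \<times> form) set"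

text \<open>Derivation trees built only from grounding rule applications:
  a leaf is a hypothesis; App ds cs B applies a rule with the grounds derived
  by ds, the conditions derived by cs, and conclusion B.\<close>
datatype gder = Hyp form | App "gder list" "gder list" form

primrec root :: "gder \<Rightarrow> form" where
  "root (Hyp A) = A"
| "root (App ds cs B) = B"

primrec leaves :: "gder \<Rightarrow> form set" where
  "leaves (Hyp A) = {A}"
| "leaves (App ds cs B) = \<Union> (set (map leaves ds)) \<union> \<Union> (set (map leaves cs))"

inductive wf_gder :: "gcalc \<Rightarrow> gder \<Rightarrow> bool" for \<kappa> where
  hyp: "wf_gder \<kappa> (Hyp A)"
| app: "\<lbrakk> (map root ds, map root cs, B) \<in> \<kappa>;
          \<forall>d\<in>set ds. wf_gder \<kappa> d; \<forall>c\<in>set cs. wf_gder \<kappa> c \<rbrakk>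
        \<Longrightarrow> wf_gder \<kappa> (App ds cs B)"

text \<open>The notion of consistency is left as a parameter (cons).\<close>
definition grounding_derivation :: "gcalc \<Rightarrow> (form set \<Rightarrow> bool) \<Rightarrow> gder \<Rightarrow> bool" where
  "grounding_derivation \<kappa> cons \<delta> \<longleftrightarrow>
     wf_gder \<kappa> \<delta> \<and> (\<exists>ds cs B. \<delta> = App ds cs B) \<and> cons (leaves \<delta>)"

inductive corr :: "elem list \<Rightarrow> elem list \<Rightarrow> form \<Rightarrow> gder \<Rightarrow> bool"
  and corr_el :: "elem \<Rightarrow> gder \<Rightarrow> bool" where
  corr_app: "\<lbrakk> length ds = length \<Gamma>; length cs = length \<Delta>;
               \<forall>i<length \<Gamma>. corr_el (\<Gamma> ! i) (ds ! i);
               \<forall>i<length \<Delta>. corr_el (\<Delta> ! i) (cs ! i) \<rbrakk>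
             \<Longrightarrow> corr \<Gamma> \<Delta> A (App ds cs A)"
| corr_form: "root d = X \<Longrightarrow> corr_el (F X) d"
| corr_tree: "corr \<Theta> \<Sigma> B d \<Longrightarrow> corr_el (T \<Theta> \<Sigma> B) d"

primrec el_hyps :: "elem \<Rightarrow> form set" where
  "el_hyps (F A) = {A}"
| "el_hyps (T \<Theta> \<Sigma> B) = \<Union> (set (map el_hyps \<Theta>)) \<union> \<Union> (set (map el_hyps \<Sigma>))"

definition tree_hyps :: "elem list \<Rightarrow> elem list \<Rightarrow> form set" where
  "tree_hyps \<Gamma> \<Delta> = \<Union> (set (map el_hyps \<Gamma>)) \<union> \<Union> (set (map el_hyps \<Delta>))"

text \<open>A calculus is represented by its derivability relation D Hs A
  (A derivable from hypotheses Hs). closed_calc kappa D says that D contains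
  the hypothesis rule, the rules of kappa, and the introduction/elimination
  rules for >> and |>.\<close>
definition closed_calc :: "gcalc \<Rightarrow> (form set \<Rightarrow> form \<Rightarrow> bool) \<Rightarrow> bool" where
  "closed_calc \<kappa> D \<longleftrightarrow>
     (\<forall>Hs A. A \<in> Hs \<longrightarrow> D Hs A)
   \<and> (\<forall>Hs As Cs B. (As, Cs, B) \<in> \<kappa> \<longrightarrow> (\<forall>a\<in>set As. D Hs a) \<longrightarrow> (\<forall>c\<in>set Cs. D Hs c)
        \<longrightarrow> D Hs B)
   \<comment> \<open>>> introduction, immediately below an application of a grounding rule\<close>
   \<and> (\<forall>Hs As Cs B. (As, Cs, B) \<in> \<kappa> \<longrightarrow> (\<forall>a\<in>set As. D Hs a) \<longrightarrow> (\<forall>c\<in>set Cs. D Hs c)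
        \<longrightarrow> D Hs (imm As Cs B))
   \<comment> \<open>>> eliminations\<close>
   \<and> (\<forall>Hs \<Gamma> \<Delta> B. D Hs (Gr \<Gamma> \<Delta> B) \<longrightarrow> D Hs B)
   \<and> (\<forall>Hs \<Gamma> \<Delta> B X. D Hs (Gr \<Gamma> \<Delta> B) \<longrightarrow> F X \<in> set \<Gamma> \<union> set \<Delta> \<longrightarrow> D Hs X)
   \<and> (\<forall>Hs As Cs B. (As, Cs, B) \<notin> \<kappa> \<longrightarrow> D Hs (imm As Cs B) \<longrightarrow> D Hs Bot)
   \<comment> \<open>|> introductions\<close>
   \<and> (\<forall>Hs \<Delta> \<Theta> A \<Gamma>1 \<Gamma>2 \<Xi> B. D Hs (Gr \<Delta> \<Theta> A) \<longrightarrow> D Hs (Gr (\<Gamma>1 @ F A # \<Gamma>2) \<Xi> B)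
        \<longrightarrow> D Hs (Gr (\<Gamma>1 @ T \<Delta> \<Theta> A # \<Gamma>2) \<Xi> B))
   \<and> (\<forall>Hs \<Delta> \<Theta> C \<Gamma> \<Xi>1 \<Xi>2 B. D Hs (Gr \<Delta> \<Theta> C) \<longrightarrow> D Hs (Gr \<Gamma> (\<Xi>1 @ F C # \<Xi>2) B)
        \<longrightarrow> D Hs (Gr \<Gamma> (\<Xi>1 @ T \<Delta> \<Theta> C # \<Xi>2) B))
   \<comment> \<open>|> eliminations\<close>
   \<and> (\<forall>Hs \<Delta> \<Theta> A \<Gamma>1 \<Gamma>2 \<Xi> B. D Hs (Gr (\<Gamma>1 @ T \<Delta> \<Theta> A # \<Gamma>2) \<Xi> B)
        \<longrightarrow> D Hs (Gr \<Delta> \<Theta> A) \<and> D Hs (Gr (\<Gamma>1 @ F A # \<Gamma>2) \<Xi> B))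
   \<and> (\<forall>Hs \<Delta> \<Theta> C \<Gamma> \<Xi>1 \<Xi>2 B. D Hs (Gr \<Gamma> (\<Xi>1 @ T \<Delta> \<Theta> C # \<Xi>2) B)
        \<longrightarrow> D Hs (Gr \<Delta> \<Theta> C) \<and> D Hs (Gr \<Gamma> (\<Xi>1 @ F C # \<Xi>2) B))"

end

theory Submission
  imports Defs
begin

text \<open>At the last rule application of the derivation,
  \<open>\<blacktriangleright>\<close>-introduction yields the immediate grounding claim over the roots of the premisses;
  each root that the tree records by a nested expression \<open>(\<Theta>[\<Sigma>]) \<triangleright> B\<close> is then
  replaced by that expression with \<open>\<triangleright>\<close>-introduction, whose left premiss
  \<open>\<Theta>[\<Sigma>] \<blacktriangleright> B\<close> is the induction hypothesis. The premisses needed for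
  \<open>\<blacktriangleright>\<close>-introduction are hypotheses (for formula elements) or follow from the
  induction hypothesis by \<open>\<blacktriangleright>\<close>-elimination (for nested expressions).\<close>

lemma closed_calc_hyp: "closed_calc \<kappa> D \<Longrightarrow> A \<in> Hs \<Longrightarrow> D Hs A"
  unfolding closed_calc_def by (elim conjE) metis

lemma closed_calc_imm_intro:
  "closed_calc \<kappa> D \<Longrightarrow> (As, Cs, B) \<in> \<kappa> \<Longrightarrow> \<forall>a\<in>set As. D Hs a \<Longrightarrow> \<forall>c\<in>set Cs. D Hs c
    \<Longrightarrow> D Hs (imm As Cs B)"
  unfolding closed_calc_def by (elim conjE) metis

lemma closed_calc_Gr_elim: "closed_calc \<kappa> D \<Longrightarrow> D Hs (Gr \<Gamma> \<Delta> B) \<Longrightarrow> D Hs B"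
  unfolding closed_calc_def by (elim conjE) metis

lemma closed_calc_tree_intro_ground:
  "closed_calc \<kappa> D \<Longrightarrow> D Hs (Gr \<Delta> \<Theta> A) \<Longrightarrow> D Hs (Gr (\<Gamma>1 @ F A # \<Gamma>2) \<Xi> B)
    \<Longrightarrow> D Hs (Gr (\<Gamma>1 @ T \<Delta> \<Theta> A # \<Gamma>2) \<Xi> B)"
  unfolding closed_calc_def by (elim conjE) metis

lemma closed_calc_tree_intro_condition:
  "closed_calc \<kappa> D \<Longrightarrow> D Hs (Gr \<Delta> \<Theta> C) \<Longrightarrow> D Hs (Gr \<Gamma> (\<Xi>1 @ F C # \<Xi>2) B)
    \<Longrightarrow> D Hs (Gr \<Gamma> (\<Xi>1 @ T \<Delta> \<Theta> C # \<Xi>2) B)"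
  unfolding closed_calc_def by (elim conjE) metis

definition stands_for :: "(form set \<Rightarrow> form \<Rightarrow> bool) \<Rightarrow> form set \<Rightarrow> elem \<Rightarrow> form \<Rightarrow> bool" where
  "stands_for D Hs e X \<longleftrightarrow> e = F X \<or> (\<exists>\<Theta> \<Sigma>. e = T \<Theta> \<Sigma> X \<and> D Hs (Gr \<Theta> \<Sigma> X))"

lemma stands_for_derivable:
  assumes "closed_calc \<kappa> D" and "stands_for D Hs e X" and "el_hyps e \<subseteq> Hs"
  shows "D Hs X"
  using assms(2) unfolding stands_for_def
proof
  assume "e = F X"
  then show ?thesis using assms(3) closed_calc_hyp[OF assms(1)] by simp
next
  assume "\<exists>\<Theta> \<Sigma>. e = T \<Theta> \<Sigma> X \<and> D Hs (Gr \<Theta> \<Sigma> X)"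
  then show ?thesis using closed_calc_Gr_elim[OF assms(1)] by blast
qed

lemma Gr_grounds_replace:
  assumes "closed_calc \<kappa> D"
  shows "list_all2 (stands_for D Hs) \<Gamma> Xs \<Longrightarrow> D Hs (Gr (pre @ map F Xs) \<Delta> A)
    \<Longrightarrow> D Hs (Gr (pre @ \<Gamma>) \<Delta> A)"
proof (induction \<Gamma> Xs arbitrary: pre rule: list_all2_induct)
  case Nil
  then show ?case by simp
next
  case (Cons e \<Gamma> X Xs)
  have "D Hs (Gr (pre @ e # map F Xs) \<Delta> A)"
    using Cons.hyps(1) Cons.prems closed_calc_tree_intro_ground[OF assms]
    unfolding stands_for_def by auto
  then show ?case using Cons.IH[of "pre @ [e]"] by simp
qed

lemma Gr_conditions_replace:
  assumes "closed_calc \<kappa> D"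
  shows "list_all2 (stands_for D Hs) \<Delta> Xs \<Longrightarrow> D Hs (Gr \<Gamma> (pre @ map F Xs) A)
    \<Longrightarrow> D Hs (Gr \<Gamma> (pre @ \<Delta>) A)"
proof (induction \<Delta> Xs arbitrary: pre rule: list_all2_induct)
  case Nil
  then show ?case by simp
next
  case (Cons e \<Delta> X Xs)
  have "D Hs (Gr \<Gamma> (pre @ e # map F Xs) A)"
    using Cons.hyps(1) Cons.prems closed_calc_tree_intro_condition[OF assms]
    unfolding stands_for_def by auto
  then show ?case using Cons.IH[of "pre @ [e]"] by simp
qed

lemma corresponding_tree_derivable:
  assumes calc: "closed_calc \<kappa> D"
  shows "corr \<Gamma> \<Delta> A d \<Longrightarrow> wf_gder \<kappa> d \<Longrightarrow> tree_hyps \<Gamma> \<Delta> \<subseteq> Hs \<Longrightarrow> D Hs (Gr \<Gamma> \<Delta> A)"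
    and "corr_el e d \<Longrightarrow> wf_gder \<kappa> d \<Longrightarrow> el_hyps e \<subseteq> Hs \<Longrightarrow> stands_for D Hs e (root d)"
proof (induction rule: corr_corr_el.inducts)
  case (corr_app ds \<Gamma> cs \<Delta> A)
  from corr_app.prems(1) have rule: "(map root ds, map root cs, A) \<in> \<kappa>"
    and wf_ds: "\<forall>d\<in>set ds. wf_gder \<kappa> d" and wf_cs: "\<forall>c\<in>set cs. wf_gder \<kappa> c"
    by (auto elim: wf_gder.cases)
  have hyps_\<Gamma>: "\<forall>i<length \<Gamma>. el_hyps (\<Gamma> ! i) \<subseteq> Hs"
    and hyps_\<Delta>: "\<forall>i<length \<Delta>. el_hyps (\<Delta> ! i) \<subseteq> Hs"
    using corr_app.prems(2) unfolding tree_hyps_def by (auto dest!: nth_mem)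
  have grounds: "list_all2 (stands_for D Hs) \<Gamma> (map root ds)"
    using corr_app.IH(1) corr_app.hyps(1) hyps_\<Gamma> wf_ds by (simp add: list_all2_conv_all_nth)
  have conditions: "list_all2 (stands_for D Hs) \<Delta> (map root cs)"
    using corr_app.IH(2) corr_app.hyps(2) hyps_\<Delta> wf_cs by (simp add: list_all2_conv_all_nth)
  have "\<forall>X\<in>set (map root ds). D Hs X"
    using grounds hyps_\<Gamma> stands_for_derivable[OF calc]
    by (fastforce simp: list_all2_conv_all_nth in_set_conv_nth)
  moreover have "\<forall>X\<in>set (map root cs). D Hs X"
    using conditions hyps_\<Delta> stands_for_derivable[OF calc]
    by (fastforce simp: list_all2_conv_all_nth in_set_conv_nth)
  ultimately have "D Hs (Gr (map F (map root ds)) (map F (map root cs)) A)"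
    using closed_calc_imm_intro[OF calc rule] by (simp add: imm_def)
  then have "D Hs (Gr \<Gamma> (map F (map root cs)) A)"
    using Gr_grounds_replace[OF calc grounds, of "[]"] by simp
  then show ?case
    using Gr_conditions_replace[OF calc conditions, of _ "[]"] by simp
next
  case (corr_form d X)
  then show ?case unfolding stands_for_def by simp
next
  case (corr_tree \<Theta> \<Sigma> B d)
  then have "D Hs (Gr \<Theta> \<Sigma> B)" by (simp add: tree_hyps_def)
  moreover have "root d = B" using corr_tree.hyps by (auto elim: corr.cases)
  ultimately show ?case unfolding stands_for_def by simp
qed

theorem mainTheorem2:
  fixes \<kappa> :: gcalc and cons :: "form set \<Rightarrow> bool" and \<delta> :: gder
    and D :: "form set \<Rightarrow> form \<Rightarrow> bool"
  assumes "grounding_derivation \<kappa> cons \<delta>"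
    and "corr \<Gamma> \<Delta> A \<delta>"
    and "closed_calc \<kappa> D"
  shows "D (tree_hyps \<Gamma> \<Delta>) (Gr \<Gamma> \<Delta> A)"
proof -
  have "wf_gder \<kappa> \<delta>"
    using assms(1) unfolding grounding_derivation_def by blast
  then show ?thesis
    using corresponding_tree_derivable(1)[OF assms(3) assms(2)] by blast
qed

end
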